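(* Let $\Psi=\begin{bmatrix}\Psi_{11}&\Psi_{12}\\ \Psi_{12}^\top&\Psi_{22}\end{bmatrix}\in\mathbb{R}^{(p+q)\times(p+q)}$ be symmetric with $\Psi_{11}\in\mathbb{R}^{p\times p}$, $\Psi_{22}<0$ and $\Psi|\Psi_{22}:=\Psi_{11}-\Psi_{12}\Psi_{22}^{-1}\Psi_{12}^\top>0$, and let $\mathcal M:=\{Z\in\mathbb{R}^{p\times q}:\begin{bmatrix}I\\Z^\top\end{bmatrix}^\top\Psi\begin{bmatrix}I\\Z^\top\end{bmatrix}\ge0\}$. Let $V\in\mathbb{R}^{q\times\hat q}$ and $W\in\mathbb{R}^{p\times\hat p}$ have full column rank, with $\hat p\le p$, $\hat q\le q$, and define $\mathcal M_{V,W}:=\{W^\top ZV:Z\in\mathcal M\}$ and $$\Psi_{V,W}:=\begin{bmatrix} W^\top\big(\Psi|\Psi_{22}+\Psi_{12}\Psi_{22}^{-1}V(V^\top\Psi_{22}^{-1}V)^{-1}V^\top\Psi_{22}^{-1}\Psi_{12}^\top\big)W & W^\top\Psi_{12}\Psi_{22}^{-1}V(V^\top\Psi_{22}^{-1}V)^{-1}\\ (V^\top\Psi_{22}^{-1}V)^{-1}V^\top\Psi_{22}^{-1}\Psi_{12}^\top W&(V^\top\Psi_{22}^{-1}V)^{-1}\end{bmatrix}.$$ Then $$\mathcal M_{V,W}=\Big\{\hat Z\in\mathbb{R}^{\hat p\times\hat q}:\begin{bmatrix}I\\ \hat Z^\top\end{bmatrix}^\top\Psi_{V,W}\begin{bmatrix}I\\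 \hat Z^\top\end{bmatrix}\ge0\Big\}.$$ *)

theory Defs
  imports "HOL-Analysis.Analysis"
begin

definition blk :: "real^'c1^'r1 \<Rightarrow> real^'c2^'r1 \<Rightarrow> real^'c1^'r2 \<Rightarrow> real^'c2^'r2
                    \<Rightarrow> real^('c1 + 'c2)^('r1 + 'r2)" where
  "blk A B C D = (\<chi> i j. case i of
       Inl r \<Rightarrow> (case j of Inl c \<Rightarrow> A $ r $ c | Inr c \<Rightarrow> B $ r $ c)
     | Inr r \<Rightarrow> (case j of Inl c \<Rightarrow> C $ r $ c | Inr c \<Rightarrow> D $ r $ c))"

definition vstack :: "real^'c^'r1 \<Rightarrow> real^'c^'r2 \<Rightarrow> real^'c^('r1 + 'r2)" where
  "vstack A B = (\<chi> i j. case i of Inl r \<Rightarrow> A $ r $ j | Inr r \<Rightarrow> B $ r $ j)"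

definition psd :: "real^'n^'n \<Rightarrow> bool" where
  "psd A \<longleftrightarrow> transpose A = A \<and> (\<forall>x. 0 \<le> x \<bullet> (A *v x))"

definition posdef :: "real^'n^'n \<Rightarrow> bool" where
  "posdef A \<longleftrightarrow> transpose A = A \<and> (\<forall>x. x \<noteq> 0 \<longrightarrow> 0 < x \<bullet> (A *v x))"

definition negdef :: "real^'n^'n \<Rightarrow> bool" where
  "negdef A \<longleftrightarrow> transpose A = A \<and> (\<forall>x. x \<noteq> 0 \<longrightarrow> x \<bullet> (A *v x) < 0)"

definition qmi_set :: "real^('p + 'q)^('p + 'q) \<Rightarrow> (real^'q^'p) set" where
  "qmi_set Psi = {Z. psd (transpose (vstack (mat 1) (transpose Z)) ** Psi ** vstack (mat 1) (transpose Z))}"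

end

theory Submission
  imports Defs
begin

text \<open>Completing the square, \<open>Z\<close> lies in \<open>\<M>\<close> iff \<open>X = Z + \<Psi>\<^sub>1\<^sub>2 \<Psi>\<^sub>2\<^sub>2\<^sup>-\<^sup>1\<close>
  satisfies \<open>P + X \<Psi>\<^sub>2\<^sub>2 X\<^sup>T \<ge> 0\<close>, where \<open>P = \<Psi>|\<Psi>\<^sub>2\<^sub>2\<close>. The matrix \<open>\<Psi>\<^sub>V\<^sub>,\<^sub>W\<close> is
  built so that its Schur complement is \<open>W\<^sup>T P W\<close>, its lower right block is
  \<open>(V\<^sup>T \<Psi>\<^sub>2\<^sub>2\<^sup>-\<^sup>1 V)\<^sup>-\<^sup>1\<close>, and the shift \<open>\<Psi>\<^sub>1\<^sub>2 \<Psi>\<^sub>2\<^sub>2\<^sup>-\<^sup>1\<close> turns into \<open>W\<^sup>T \<Psi>\<^sub>1\<^sub>2 \<Psi>\<^sub>2\<^sub>2\<^sup>-\<^sup>1 V\<close>. So it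
  suffices that \<open>X \<mapsto> W\<^sup>T X V\<close> maps \<open>{X. P + X D X\<^sup>T \<ge> 0}\<close> onto
  \<open>{Y. W\<^sup>T P W + Y (V\<^sup>T D\<^sup>-\<^sup>1 V)\<^sup>-\<^sup>1 Y\<^sup>T \<ge> 0}\<close> whenever \<open>D < 0 < P\<close>. It maps into this set
  because \<open>u\<^sup>T D u \<le> (V\<^sup>T u)\<^sup>T (V\<^sup>T D\<^sup>-\<^sup>1 V)\<^sup>-\<^sup>1 (V\<^sup>T u)\<close>, and onto it by an explicit
  preimage, checked with the projection inequality
  \<open>(A\<^sup>T M x)\<^sup>T (A\<^sup>T M A)\<^sup>-\<^sup>1 (A\<^sup>T M x) \<le> x\<^sup>T M x\<close> for \<open>M \<ge> 0\<close>.\<close>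

declare transpose_matrix_vector [simp del]

lemma matrix_add_rdistrib: "((A::'a::semiring_1^'n^'m) + B) ** C = A ** C + B ** C"
  by (vector matrix_matrix_mult_def sum.distrib[symmetric] field_simps)

lemma matrix_diff_ldistrib: "(A::'a::ring_1^'n^'m) ** (B - C) = A ** B - A ** C"
  by (vector matrix_matrix_mult_def sum_subtractf[symmetric] field_simps)

lemma matrix_diff_rdistrib: "((A::'a::ring_1^'n^'m) - B) ** C = A ** C - B ** C"
  by (vector matrix_matrix_mult_def sum_subtractf[symmetric] field_simps)

lemma matrix_mul_uminus_left: "(- (A::'a::ring_1^'n^'m)) ** B = - (A ** B)"
  by (vector matrix_matrix_mult_def sum_negf[symmetric])

lemma matrix_mul_uminus_right: "(A::'a::ring_1^'n^'m) ** (- B) = - (A ** B)"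
  by (vector matrix_matrix_mult_def sum_negf[symmetric])

lemma matrix_vector_mult_uminus_left: "(- (A::'a::ring_1^'n^'m)) *v x = - (A *v x)"
  by (vector matrix_vector_mult_def sum_negf[symmetric])

lemma matrix_vector_mult_uminus_right: "(A::'a::ring_1^'n^'m) *v (- x) = - (A *v x)"
  by (vector matrix_vector_mult_def sum_negf[symmetric])

lemma transpose_add: "transpose ((A::'a::semiring_1^'n^'m) + B) = transpose A + transpose B"
  by (simp add: transpose_def vec_eq_iff)

lemma transpose_uminus: "transpose (- (A::'a::ring_1^'n^'m)) = - transpose A"
  by (simp add: transpose_def vec_eq_iff)

lemma inner_matrix_vector_mult: "x \<bullet> ((A::real^'n^'m) *v y) = (transpose A *v x) \<bullet> y"
  by (simp add: transpose_matrix_vector dot_lmul_matrix)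

lemma inner_transpose_mult_mult:
  "x \<bullet> ((transpose (A::real^'k^'n) ** M ** A) *v x) = (A *v x) \<bullet> (M *v (A *v x))"
  using inner_matrix_vector_mult[of x "transpose A"] by (simp add: matrix_vector_mul_assoc[symmetric])

lemma
  assumes "invertible (A::'a::semiring_1^'n^'m)"
  shows matrix_inv_right: "A ** matrix_inv A = mat 1"
    and matrix_inv_left: "matrix_inv A ** A = mat 1"
proof -
  have "A ** matrix_inv A = mat 1 \<and> matrix_inv A ** A = mat 1"
    using assms unfolding invertible_def matrix_inv_def by (rule someI_ex)
  then show "A ** matrix_inv A = mat 1" "matrix_inv A ** A = mat 1" by auto
qed

lemma matrix_inv_unique:
  assumes "(A::'a::field^'n^'n) ** B = mat 1"
  shows "matrix_inv A = B"
proof -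
  have "invertible A" using assms invertible_right_inverse by blast
  have "matrix_inv A = matrix_inv A ** (A ** B)" using assms by simp
  also have "\<dots> = B" by (simp add: matrix_mul_assoc matrix_inv_left[OF \<open>invertible A\<close>])
  finally show ?thesis .
qed

lemma transpose_matrix_inv_symmetric:
  assumes "invertible (A::'a::field^'n^'n)" "transpose A = A"
  shows "transpose (matrix_inv A) = matrix_inv A"
proof -
  have "A ** transpose (matrix_inv A) = mat 1"
    by (metis assms matrix_transpose_mul matrix_inv_left transpose_mat)
  then show ?thesis using matrix_inv_unique by metis
qed

lemma invertible_if_ker_trivial:
  assumes "\<And>x. (A::real^'n^'n) *v x = 0 \<Longrightarrow> x = 0"
  shows "invertible A"
  using assms invertible_left_inverse matrix_left_invertible_ker by blast

lemma negdef_imp_invertible: "negdef A \<Longrightarrow> invertible A"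
  unfolding negdef_def by (metis invertible_if_ker_trivial inner_zero_right order.irrefl)

lemma posdef_imp_invertible: "posdef A \<Longrightarrow> invertible A"
  unfolding posdef_def by (metis invertible_if_ker_trivial inner_zero_right order.irrefl)

lemma posdef_imp_psd: "posdef A \<Longrightarrow> psd A"
  unfolding posdef_def psd_def by (metis inner_zero_left order.refl order.strict_implies_order)

lemma negdef_imp_psd_uminus: "negdef A \<Longrightarrow> psd (- A)"
  unfolding negdef_def psd_def
  by (auto simp: transpose_uminus matrix_vector_mult_uminus_left)
    (metis inner_zero_left order.refl order.strict_implies_order)

lemma negdef_congruence:
  assumes "negdef (M::real^'n^'n)" "inj ((*v) (A::real^'k^'n))"
  shows "negdef (transpose A ** M ** A)"
  unfolding negdef_def
proof safe
  show "transpose (transpose A ** M ** A) = transpose A ** M ** A"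
    using assms(1) by (simp add: negdef_def matrix_transpose_mul matrix_mul_assoc)
  fix x :: "real^'k" assume "x \<noteq> 0"
  then have "A *v x \<noteq> 0" using assms(2) by (metis inj_eq matrix_vector_mult_0_right)
  then show "x \<bullet> ((transpose A ** M ** A) *v x) < 0"
    using assms(1) unfolding inner_transpose_mult_mult negdef_def by simp
qed

lemma posdef_congruence:
  assumes "posdef (M::real^'n^'n)" "inj ((*v) (A::real^'k^'n))"
  shows "posdef (transpose A ** M ** A)"
  unfolding posdef_def
proof safe
  show "transpose (transpose A ** M ** A) = transpose A ** M ** A"
    using assms(1) by (simp add: posdef_def matrix_transpose_mul matrix_mul_assoc)
  fix x :: "real^'k" assume "x \<noteq> 0"
  then have "A *v x \<noteq> 0" using assms(2) by (metis inj_eq matrix_vector_mult_0_right)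
  then show "0 < x \<bullet> ((transpose A ** M ** A) *v x)"
    using assms(1) unfolding inner_transpose_mult_mult posdef_def by simp
qed

lemma negdef_matrix_inv:
  assumes "negdef (A::real^'n^'n)"
  shows "negdef (matrix_inv A)"
  unfolding negdef_def
proof safe
  have "invertible A" using assms negdef_imp_invertible by blast
  then show "transpose (matrix_inv A) = matrix_inv A"
    using transpose_matrix_inv_symmetric assms negdef_def by blast
  fix x :: "real^'n" assume "x \<noteq> 0"
  let ?y = "matrix_inv A *v x"
  have Ay: "A *v ?y = x"
    using \<open>invertible A\<close> by (simp add: matrix_vector_mul_assoc matrix_inv_right)
  then have "?y \<noteq> 0" using \<open>x \<noteq> 0\<close> by auto
  then have "?y \<bullet> (A *v ?y) < 0" using assms negdef_def by blast
  then show "x \<bullet> (matrix_inv A *v x) < 0" using Ay by (simp add: inner_commute)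
qed

lemma sum_UNIV_Plus:
  "sum (f::('a::finite + 'b::finite) \<Rightarrow> 'c::comm_monoid_add) UNIV
     = sum (\<lambda>i. f (Inl i)) UNIV + sum (\<lambda>i. f (Inr i)) UNIV"
  by (subst UNIV_Plus_UNIV[symmetric], subst sum.Plus) (auto simp: o_def)

lemma blk_mult_vstack: "blk A B C D ** vstack X Y = vstack (A ** X + B ** Y) (C ** X + D ** Y)"
  by (simp add: vec_eq_iff blk_def vstack_def matrix_matrix_mult_def sum_UNIV_Plus split: sum.splits)

lemma transpose_vstack_mult_vstack:
  "transpose (vstack P Q) ** vstack R S = transpose P ** R + transpose Q ** S"
  by (simp add: vec_eq_iff transpose_def vstack_def matrix_matrix_mult_def sum_UNIV_Plus)

lemma transpose_vstack_blk_vstack: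
  "transpose (vstack (mat 1) (transpose Z)) ** blk A B C D ** vstack (mat 1) (transpose Z)
     = A + B ** transpose Z + Z ** C + Z ** D ** transpose Z"
  by (simp add: matrix_mul_assoc[symmetric] blk_mult_vstack transpose_vstack_mult_vstack
      matrix_add_ldistrib)

lemma completing_square:
  fixes A :: "real^'p^'p" and B Z :: "real^'q^'p" and D :: "real^'q^'q"
  assumes "transpose D = D" "invertible D"
  shows "A + B ** transpose Z + Z ** transpose B + Z ** D ** transpose Z
    = (A - B ** matrix_inv D ** transpose B)
      + (Z + B ** matrix_inv D) ** D ** transpose (Z + B ** matrix_inv D)"
proof -
  have "transpose (matrix_inv D) = matrix_inv D"
    using assms transpose_matrix_inv_symmetric by blast
  moreover have "B ** matrix_inv D ** D = B" "Z ** D ** matrix_inv D = Z"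
    using assms(2) by (simp_all add: matrix_mul_assoc[symmetric] matrix_inv_left matrix_inv_right)
  ultimately show ?thesis
    by (simp add: transpose_add matrix_transpose_mul matrix_add_rdistrib matrix_add_ldistrib
        matrix_mul_assoc)
qed

lemma qmi_set_blk_translate:
  fixes A :: "real^'p^'p" and B :: "real^'q^'p" and D :: "real^'q^'q"
  assumes "transpose D = D" "invertible D"
  shows "qmi_set (blk A B (transpose B) D)
    = (\<lambda>X. X - B ** matrix_inv D) ` qmi_set (blk (A - B ** matrix_inv D ** transpose B) 0 0 D)"
    (is "?M = (\<lambda>X. X - ?C) ` ?E")
proof -
  have shift: "Z \<in> ?M \<longleftrightarrow> Z + ?C \<in> ?E" for Z
    unfolding qmi_set_def mem_Collect_eq transpose_vstack_blk_vstack completing_square[OF assms]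
    by (simp only: times0_left times0_right add_0_right)
  show ?thesis
  proof (intro set_eqI iffI)
    fix Z assume "Z \<in> ?M"
    then have "Z + ?C \<in> ?E" using shift by blast
    then show "Z \<in> (\<lambda>X. X - ?C) ` ?E" by (rule image_eqI[rotated]) simp
  next
    fix Z assume "Z \<in> (\<lambda>X. X - ?C) ` ?E"
    then obtain X where "X \<in> ?E" "Z = X - ?C" by blast
    then show "Z \<in> ?M" using shift[of "X - ?C"] by simp
  qed
qed

lemma mem_qmi_set_blk_diag_iff:
  fixes P :: "real^'p^'p" and D :: "real^'q^'q"
  assumes "transpose P = P" "transpose D = D"
  shows "X \<in> qmi_set (blk P 0 0 D)
    \<longleftrightarrow> (\<forall>x. 0 \<le> x \<bullet> (P *v x) + (transpose X *v x) \<bullet> (D *v (transpose X *v x)))"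
proof -
  have "transpose (P + X ** D ** transpose X) = P + X ** D ** transpose X"
    using assms by (simp add: transpose_add matrix_transpose_mul matrix_mul_assoc)
  then show ?thesis
    unfolding qmi_set_def mem_Collect_eq transpose_vstack_blk_vstack psd_def
    using inner_transpose_mult_mult[of _ "transpose X" D]
    by (simp add: matrix_vector_mult_add_rdistrib inner_add_right)
qed

text \<open>\<open>A (A\<^sup>T M A)\<^sup>-\<^sup>1 A\<^sup>T M\<close> is the \<open>M\<close>-orthogonal projection onto the range of \<open>A\<close>,
  so it does not increase the \<open>M\<close>-seminorm.\<close>

lemma psd_projection_le:
  fixes M :: "real^'n^'n" and A :: "real^'k^'n"
  assumes "psd M" and inv: "invertible (transpose A ** M ** A)"
  shows "(transpose A *v (M *v x)) \<bullet> (matrix_inv (transpose A ** M ** A) *v (transpose A *v (M *v x)))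
    \<le> x \<bullet> (M *v x)"
proof -
  let ?G = "transpose A ** M ** A"
  let ?b = "transpose A *v (M *v x)"
  let ?w = "matrix_inv ?G *v ?b"
  have sym: "transpose M = M" using \<open>psd M\<close> psd_def by blast
  have "?G *v ?w = (?G ** matrix_inv ?G) *v ?b" by (rule matrix_vector_mul_assoc)
  then have "?G *v ?w = ?b" by (simp only: matrix_inv_right[OF inv] matrix_vector_mul_lid)
  then have quadratic: "(A *v ?w) \<bullet> (M *v (A *v ?w)) = ?b \<bullet> ?w"
    using inner_transpose_mult_mult[of ?w A M] by (simp add: inner_commute)
  have "(M *v x) \<bullet> (A *v ?w) = ?b \<bullet> ?w" by (rule inner_matrix_vector_mult)
  then have cross: "x \<bullet> (M *v (A *v ?w)) = ?b \<bullet> ?w" "(A *v ?w) \<bullet> (M *v x) = ?b \<bullet> ?w"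
    using inner_matrix_vector_mult[of x M "A *v ?w"] sym by (simp_all add: inner_commute)
  have "0 \<le> (x - A *v ?w) \<bullet> (M *v (x - A *v ?w))" using \<open>psd M\<close> psd_def by blast
  also have "\<dots> = x \<bullet> (M *v x) - ?b \<bullet> ?w"
    by (simp add: matrix_vector_mult_diff_distrib inner_diff_left inner_diff_right quadratic cross)
  finally show ?thesis by (simp add: inner_commute)
qed

text \<open>With the next lemma: \<open>(V\<^sup>T D\<^sup>-\<^sup>1 V)\<^sup>-\<^sup>1\<close> is the maximum of the form of \<open>D\<close> on the
  fibres of \<open>V\<^sup>T\<close>, attained at \<open>D\<^sup>-\<^sup>1 V (V\<^sup>T D\<^sup>-\<^sup>1 V)\<^sup>-\<^sup>1 t\<close> on the fibre over \<open>t\<close>.\<close>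

lemma negdef_quadratic_form_le_compressed:
  fixes D :: "real^'q^'q" and V :: "real^'k^'q"
  assumes "negdef D" "inj ((*v) V)"
  shows "u \<bullet> (D *v u)
    \<le> (transpose V *v u) \<bullet> (matrix_inv (transpose V ** matrix_inv D ** V) *v (transpose V *v u))"
proof -
  let ?K = "transpose V ** matrix_inv D ** V"
  have "negdef ?K" using negdef_congruence[OF negdef_matrix_inv[OF assms(1)] assms(2)] .
  then have "(transpose V ** (- matrix_inv D) ** V) ** (- matrix_inv ?K) = mat 1"
    by (simp add: matrix_mul_uminus_left matrix_mul_uminus_right matrix_inv_right
        negdef_imp_invertible)
  then have inv: "invertible (transpose V ** (- matrix_inv D) ** V)"
    and inv_eq: "matrix_inv (transpose V ** (- matrix_inv D) ** V) = - matrix_inv ?K"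
    using invertible_right_inverse matrix_inv_unique by blast+
  have "(- matrix_inv D) *v (D *v u) = - u"
    using negdef_imp_invertible[OF assms(1)]
    by (simp add: matrix_vector_mul_assoc matrix_mul_uminus_left matrix_inv_left
        matrix_vector_mult_uminus_left)
  with psd_projection_le[OF negdef_imp_psd_uminus[OF negdef_matrix_inv[OF assms(1)]] inv, of "D *v u"]
  show ?thesis
    unfolding inv_eq
    by (simp add: matrix_vector_mult_uminus_left matrix_vector_mult_uminus_right inner_commute)
qed

lemma negdef_quadratic_form_compressed_attained:
  fixes D :: "real^'q^'q" and V :: "real^'k^'q"
  assumes "negdef D" "inj ((*v) V)"
  defines "K \<equiv> transpose V ** matrix_inv D ** V"
  shows "(matrix_inv D *v (V *v (matrix_inv K *v t))) \<bullet> (D *v (matrix_inv D *v (V *v (matrix_inv K *v t))))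
    = t \<bullet> (matrix_inv K *v t)"
proof -
  have "invertible D" using assms(1) negdef_imp_invertible by blast
  have "negdef K" unfolding K_def using negdef_congruence[OF negdef_matrix_inv[OF assms(1)] assms(2)] .
  then have "invertible K" using negdef_imp_invertible by blast
  define s where "s = V *v (matrix_inv K *v t)"
  have "D *v (matrix_inv D *v s) = s"
    using \<open>invertible D\<close> by (simp add: matrix_vector_mul_assoc matrix_inv_right)
  then have "(matrix_inv D *v s) \<bullet> (D *v (matrix_inv D *v s)) = s \<bullet> (matrix_inv D *v s)"
    by (simp add: inner_commute)
  also have "\<dots> = (matrix_inv K *v t) \<bullet> (K *v (matrix_inv K *v t))"
    unfolding s_def K_def by (rule inner_transpose_mult_mult[symmetric])
  also have "\<dots> = t \<bullet> (matrix_inv K *v t)"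
    using \<open>invertible K\<close> by (simp add: matrix_vector_mul_assoc matrix_inv_right inner_commute)
  finally show ?thesis unfolding s_def .
qed

lemma compression_mem_qmi_set:
  fixes P :: "real^'p^'p" and D :: "real^'q^'q" and V :: "real^'qh^'q" and W :: "real^'ph^'p"
  assumes "transpose P = P" "negdef D" "inj ((*v) V)" and X: "X \<in> qmi_set (blk P 0 0 D)"
  shows "transpose W ** X ** V
    \<in> qmi_set (blk (transpose W ** P ** W) 0 0 (matrix_inv (transpose V ** matrix_inv D ** V)))"
proof -
  let ?K = "transpose V ** matrix_inv D ** V"
  have "negdef ?K" using negdef_congruence[OF negdef_matrix_inv[OF assms(2)] assms(3)] .
  then have K_inv_sym: "transpose (matrix_inv ?K) = matrix_inv ?K"
    using negdef_def negdef_imp_invertible transpose_matrix_inv_symmetric by blast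
  have G_sym: "transpose (transpose W ** P ** W) = transpose W ** P ** W"
    using assms(1) by (simp add: matrix_transpose_mul matrix_mul_assoc)
  have "transpose D = D" using assms(2) negdef_def by blast
  then have hyp: "0 \<le> x \<bullet> (P *v x) + (transpose X *v x) \<bullet> (D *v (transpose X *v x))" for x
    using X mem_qmi_set_blk_diag_iff[OF assms(1)] by blast
  show ?thesis
    unfolding mem_qmi_set_blk_diag_iff[OF G_sym K_inv_sym]
  proof
    fix y :: "real^'ph"
    have image: "transpose (transpose W ** X ** V) *v y = transpose V *v (transpose X *v (W *v y))"
      by (simp add: matrix_transpose_mul matrix_vector_mul_assoc)
    show "0 \<le> y \<bullet> ((transpose W ** P ** W) *v y)
        + (transpose (transpose W ** X ** V) *v y)
          \<bullet> (matrix_inv ?K *v (transpose (transpose W ** X ** V) *v y))"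
      unfolding image inner_transpose_mult_mult
      using hyp[of "W *v y"] negdef_quadratic_form_le_compressed[OF assms(2,3), of "transpose X *v (W *v y)"]
      by linarith
  qed
qed

text \<open>\<open>X\<^sup>T x\<close> depends only on the \<open>P\<close>-orthogonal projection of \<open>x\<close> onto the range of \<open>W\<close> and
  lies where the form of \<open>D\<close> is maximal on its fibre of \<open>V\<^sup>T\<close>, so both inequalities used in
  \<open>compression_mem_qmi_set\<close> become equalities.\<close>

definition compression_lift ::
    "real^'p^'p \<Rightarrow> real^'q^'q \<Rightarrow> real^'qh^'q \<Rightarrow> real^'ph^'p \<Rightarrow> real^'qh^'ph \<Rightarrow> real^'q^'p" where
  "compression_lift P D V W Y = P ** W ** matrix_inv (transpose W ** P ** W) ** Y
     ** matrix_inv (transpose V ** matrix_inv D ** V) ** transpose V ** matrix_inv D"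

lemma compression_compression_lift:
  assumes "invertible (transpose W ** P ** W)" "invertible (transpose V ** matrix_inv D ** V)"
  shows "transpose W ** compression_lift P D V W Y ** V = Y"
proof -
  have "transpose W ** compression_lift P D V W Y ** V
      = ((transpose W ** P ** W) ** matrix_inv (transpose W ** P ** W)) ** Y
        ** (matrix_inv (transpose V ** matrix_inv D ** V) ** (transpose V ** matrix_inv D ** V))"
    unfolding compression_lift_def by (simp add: matrix_mul_assoc)
  then show ?thesis using assms by (simp add: matrix_inv_left matrix_inv_right)
qed

lemma compression_lift_mem_qmi_set:
  fixes P :: "real^'p^'p" and D :: "real^'q^'q" and V :: "real^'qh^'q" and W :: "real^'ph^'p"
  assumes "posdef P" "negdef D" "inj ((*v) V)" "inj ((*v) W)"
    and Y: "Y \<in> qmi_set (blk (transpose W ** P ** W) 0 0 (matrix_inv (transpose V ** matrix_inv D ** V)))"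
  shows "compression_lift P D V W Y \<in> qmi_set (blk P 0 0 D)"
proof -
  define K where "K = transpose V ** matrix_inv D ** V"
  define G where "G = transpose W ** P ** W"
  have D: "transpose D = D" "transpose (matrix_inv D) = matrix_inv D"
    using assms(2) negdef_def negdef_matrix_inv by blast+
  have "negdef K" unfolding K_def using negdef_congruence[OF negdef_matrix_inv[OF assms(2)] assms(3)] .
  then have K: "transpose (matrix_inv K) = matrix_inv K"
    using negdef_def negdef_imp_invertible transpose_matrix_inv_symmetric by blast
  have "posdef G" unfolding G_def using posdef_congruence[OF assms(1,4)] .
  then have G: "invertible G" "transpose G = G" "transpose (matrix_inv G) = matrix_inv G"
    using posdef_def posdef_imp_invertible transpose_matrix_inv_symmetric by blast+
  have P: "transpose P = P" using assms(1) posdef_def by blast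
  have hyp: "0 \<le> y \<bullet> (G *v y) + (transpose Y *v y) \<bullet> (matrix_inv K *v (transpose Y *v y))" for y
    using Y mem_qmi_set_blk_diag_iff[OF G(2)[unfolded G_def] K[unfolded K_def]]
    unfolding G_def K_def by blast
  show ?thesis
    unfolding mem_qmi_set_blk_diag_iff[OF P D(1)]
  proof
    fix x :: "real^'p"
    define X where "X = compression_lift P D V W Y"
    define b where "b = transpose W *v (P *v x)"
    define y where "y = matrix_inv G *v b"
    define t where "t = transpose Y *v y"
    have "transpose X *v x = matrix_inv D *v (V *v (matrix_inv K *v t))"
      unfolding X_def compression_lift_def t_def y_def b_def G_def K_def
      by (simp add: matrix_transpose_mul matrix_vector_mul_assoc P D(2) K[unfolded K_def]
          G(3)[unfolded G_def])
    then have "(transpose X *v x) \<bullet> (D *v (transpose X *v x)) = t \<bullet> (matrix_inv K *v t)"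
      unfolding K_def by (simp only: negdef_quadratic_form_compressed_attained[OF assms(2,3)])
    moreover have "y \<bullet> (G *v y) \<le> x \<bullet> (P *v x)"
    proof -
      have "G *v y = b" unfolding y_def using G(1) by (simp add: matrix_vector_mul_assoc matrix_inv_right)
      then have "y \<bullet> (G *v y) = b \<bullet> (matrix_inv G *v b)" unfolding y_def by (simp add: inner_commute)
      then show ?thesis
        using psd_projection_le[OF posdef_imp_psd[OF assms(1)], of W x] G(1)
        unfolding b_def G_def by simp
    qed
    ultimately show "0 \<le> x \<bullet> (P *v x) + (transpose X *v x) \<bullet> (D *v (transpose X *v x))"
      using hyp[of y] unfolding t_def by linarith
  qed
qed

lemma qmi_set_compression:
  fixes P :: "real^'p^'p" and D :: "real^'q^'q" and V :: "real^'qh^'q" and W :: "real^'ph^'p"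
  assumes "posdef P" "negdef D" "inj ((*v) V)" "inj ((*v) W)"
  shows "(\<lambda>X. transpose W ** X ** V) ` qmi_set (blk P 0 0 D)
    = qmi_set (blk (transpose W ** P ** W) 0 0 (matrix_inv (transpose V ** matrix_inv D ** V)))"
proof (intro equalityI subsetI)
  fix Y assume "Y \<in> (\<lambda>X. transpose W ** X ** V) ` qmi_set (blk P 0 0 D)"
  moreover have "transpose P = P" using assms(1) posdef_def by blast
  ultimately show "Y \<in> qmi_set (blk (transpose W ** P ** W) 0 0 (matrix_inv (transpose V ** matrix_inv D ** V)))"
    using compression_mem_qmi_set[OF _ assms(2,3)] by blast
next
  fix Y assume Y: "Y \<in> qmi_set (blk (transpose W ** P ** W) 0 0 (matrix_inv (transpose V ** matrix_inv D ** V)))"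
  have "invertible (transpose W ** P ** W)"
    using posdef_congruence[OF assms(1,4)] posdef_imp_invertible by blast
  moreover have "invertible (transpose V ** matrix_inv D ** V)"
    using negdef_congruence[OF negdef_matrix_inv[OF assms(2)] assms(3)] negdef_imp_invertible by blast
  ultimately have "Y = transpose W ** compression_lift P D V W Y ** V"
    by (simp add: compression_compression_lift)
  then show "Y \<in> (\<lambda>X. transpose W ** X ** V) ` qmi_set (blk P 0 0 D)"
    using compression_lift_mem_qmi_set[OF assms Y] by blast
qed

lemma qmi_set_reduced_blk:
  fixes P :: "real^'p^'p" and C :: "real^'q^'p" and K :: "real^'k^'k"
    and V :: "real^'k^'q" and W :: "real^'ph^'p"
  assumes "transpose K = K" "invertible K"
  shows "qmi_set (blk (transpose W ** (P + C ** V ** matrix_inv K ** transpose V ** transpose C) ** W)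
      (transpose W ** C ** V ** matrix_inv K) (transpose (transpose W ** C ** V ** matrix_inv K))
      (matrix_inv K))
    = (\<lambda>Y. Y - transpose W ** C ** V) ` qmi_set (blk (transpose W ** P ** W) 0 0 (matrix_inv K))"
proof -
  have "matrix_inv K ** K = mat 1" using assms(2) by (rule matrix_inv_left)
  then have Ki: "invertible (matrix_inv K)" "matrix_inv (matrix_inv K) = K"
    using invertible_right_inverse matrix_inv_unique by blast+
  have Ki_sym: "transpose (matrix_inv K) = matrix_inv K"
    using assms transpose_matrix_inv_symmetric by blast
  have "transpose W ** C ** V ** matrix_inv K ** K = transpose W ** C ** V"
    using \<open>matrix_inv K ** K = mat 1\<close> by (simp flip: matrix_mul_assoc)
  then show ?thesis
    using qmi_set_blk_translate[OF Ki_sym Ki(1),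
        of "transpose W ** (P + C ** V ** matrix_inv K ** transpose V ** transpose C) ** W"
        "transpose W ** C ** V ** matrix_inv K"]
    by (simp add: Ki(2) Ki_sym matrix_transpose_mul matrix_add_ldistrib matrix_add_rdistrib
        matrix_mul_assoc)
qed

theorem theoremA1:
  fixes Psi11 :: "real^'p^'p" and Psi12 :: "real^'q^'p" and Psi22 :: "real^'q^'q"
    and V :: "real^'qh^'q" and W :: "real^'ph^'p"
  assumes "transpose Psi11 = Psi11" and "transpose Psi22 = Psi22"
    and "negdef Psi22"
    and "posdef (Psi11 - Psi12 ** matrix_inv Psi22 ** transpose Psi12)"
    and "rank V = CARD('qh)" and "rank W = CARD('ph)"
    and "CARD('ph) \<le> CARD('p)" and "CARD('qh) \<le> CARD('q)"
  shows "(\<lambda>Z. transpose W ** Z ** V) ` qmi_set (blk Psi11 Psi12 (transpose Psi12) Psi22) =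
    qmi_set (blk
      (transpose W ** ((Psi11 - Psi12 ** matrix_inv Psi22 ** transpose Psi12)
          + Psi12 ** matrix_inv Psi22 ** V ** matrix_inv (transpose V ** matrix_inv Psi22 ** V)
            ** transpose V ** matrix_inv Psi22 ** transpose Psi12) ** W)
      (transpose W ** Psi12 ** matrix_inv Psi22 ** V ** matrix_inv (transpose V ** matrix_inv Psi22 ** V))
      (matrix_inv (transpose V ** matrix_inv Psi22 ** V) ** transpose V ** matrix_inv Psi22 ** transpose Psi12 ** W)
      (matrix_inv (transpose V ** matrix_inv Psi22 ** V)))"
proof -
  define P where "P = Psi11 - Psi12 ** matrix_inv Psi22 ** transpose Psi12"
  define C where "C = Psi12 ** matrix_inv Psi22"
  define K where "K = transpose V ** matrix_inv Psi22 ** V"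
  have V: "inj ((*v) V)" and W: "inj ((*v) W)" using assms(5,6) full_rank_injective by blast+
  have Psi22: "invertible Psi22" "transpose (matrix_inv Psi22) = matrix_inv Psi22"
    using assms(2,3) negdef_imp_invertible transpose_matrix_inv_symmetric by blast+
  have "negdef K" unfolding K_def using negdef_congruence[OF negdef_matrix_inv[OF assms(3)] V] .
  then have K: "transpose K = K" "invertible K" "transpose (matrix_inv K) = matrix_inv K"
    using negdef_def negdef_imp_invertible transpose_matrix_inv_symmetric by blast+
  have "(\<lambda>Z. transpose W ** Z ** V) ` qmi_set (blk Psi11 Psi12 (transpose Psi12) Psi22)
      = (\<lambda>Z. transpose W ** Z ** V) ` (\<lambda>X. X - C) ` qmi_set (blk P 0 0 Psi22)"
    unfolding P_def C_def by (simp only: qmi_set_blk_translate[OF assms(2) Psi22(1)])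
  also have "\<dots> = (\<lambda>Y. Y - transpose W ** C ** V) ` (\<lambda>X. transpose W ** X ** V) ` qmi_set (blk P 0 0 Psi22)"
    by (simp add: image_image matrix_diff_ldistrib matrix_diff_rdistrib)
  also have "\<dots> = (\<lambda>Y. Y - transpose W ** C ** V) ` qmi_set (blk (transpose W ** P ** W) 0 0 (matrix_inv K))"
    unfolding K_def using qmi_set_compression[OF assms(4)[folded P_def] assms(3) V W] by simp
  also have "\<dots> = qmi_set (blk (transpose W ** (P + C ** V ** matrix_inv K ** transpose V ** transpose C) ** W)
      (transpose W ** C ** V ** matrix_inv K) (transpose (transpose W ** C ** V ** matrix_inv K))
      (matrix_inv K))"
    by (rule qmi_set_reduced_blk[OF K(1,2), symmetric])
  finally show ?thesis
    unfolding P_def C_def K_def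
    using K(3)[unfolded K_def] by (simp add: matrix_transpose_mul matrix_mul_assoc Psi22(2))
qed

end
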